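(* Let $L_0+\lambda L_1\in\mathbb{C}[\lambda]^{m\times n}$ be a matrix pencil. Suppose $U\in\mathbb{C}^{m\times m}$, $V\in\mathbb{C}^{n\times n}$ are unitary and \[ U^*(L_0+\lambda L_1)V=\begin{bmatrix}\tilde A & X\\ 0 & A_r\end{bmatrix}+\lambda\begin{bmatrix}\tilde E & Y\\ 0 & E_r\end{bmatrix}, \] where $A_r$ has full column rank and $\tilde A+\lambda\tilde E$ is block upper triangular with block rows of sizes $s_1,\dots,s_k$ and block columns of sizes $t_1,\dots,t_k$ (blocks $A_{i,j},E_{i,j}\in\mathbb{C}^{s_i\times t_j}$), with zero block-diagonal blocks in $\tilde A$, each $E_{i,i}$ of full row rank $s_i$ and each $A_{i,i+1}$ of full column rank $t_{i+1}$. Let $U_d$ and $V_d$ be unitary block-diagonal matrices, conformal with this block structure (and equal to the identity on the rows/columns outside $\tilde A+\lambda\tilde E$), such that, with $\hat U=UU_d$ and $\hat V=VV_d$ in place of $U,V$, the stairs take the form $A_{i,i+1}=\begin{bmatrix}\hat A_{i,i+1}\\0\end{bmatrix}$, $E_{i,i}=\begin{bmatrix}0&\hat E_{i,i}\end{bmatrix}$ with $\hat A_{i,i+1},\hat E_{i,i}$ square, upper triangular and invertible. Let $S$ and $T$ be unit upper triangular matrices bidiagonalizing the resulting leading subpencil $\tilde A+\lambda\tilde E$ (i.e. eliminating all blocks except the $E_{i,i}$ and $A_{i,i+1}$), extended by identity blocks to size $m\times m$ and $n\times n$. Define $\hat S:=UU_dS$ and $\hat T:=VV_dT$, $\sigma_i:=\sum_{j=1}^i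 s_j$, $\tau_i:=\sum_{j=1}^i t_j$. Define the Wong sequences $\mathcal{U}_0=\{0\}\subseteq\mathbb{C}^m$ and, for $i=1,\dots,k$, $\mathcal{V}_i=L_0^{\leftarrow}\mathcal{U}_{i-1}\subseteq\mathbb{C}^n$ and $\mathcal{U}_i=L_1\mathcal{V}_i\subseteq\mathbb{C}^m$. Then for $i=1,\dots,k$, \[ \mathcal{U}_i=\operatorname{im}\hat S\begin{bmatrix}I_{\sigma_i}\\0\end{bmatrix},\qquad \mathcal{V}_i=\operatorname{im}\hat T\begin{bmatrix}I_{\tau_i}\\0\end{bmatrix}, \] i.e. the (in general non-orthonormal) leading block columns of $\hat S$ and $\hat T$ span the nested Wong spaces.
   Context: For a matrix $M$ and subspaces $\mathcal{V},\mathcal{U}$: $M\mathcal{V}:=\{Mv: v\in\mathcal{V}\}$ is the image and $M^{\leftarrow}\mathcal{U}:=\{v: Mv\in\mathcal{U}\}$ is the preimage. A unit upper triangular matrix is upper triangular with ones on the diagonal. It is known (and used here) that for such a staircase form the Wong spaces satisfy $\mathcal{U}_i=\operatorname{im}U\begin{bmatrix}I_{\sigma_i}\\0\end{bmatrix}$ and $\mathcal{V}_i=\operatorname{im}V\begin{bmatrix}I_{\tau_i}\\0\end{bmatrix}$. *)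

theory Defs
  imports "Jordan_Normal_Form.DL_Rank" "Jordan_Normal_Form.Schur_Decomposition"
begin

text \<open>Complex matrices are Jordan_Normal_Form matrices of type complex mat
  (dimensions stored in the value).  U^* is mat_adjoint U.\<close>

definition unitary_mat :: "complex mat \<Rightarrow> nat \<Rightarrow> bool" where
  "unitary_mat U n \<longleftrightarrow> U \<in> carrier_mat n n \<and> mat_adjoint U * U = 1\<^sub>m n"

definition unit_upper_triangular :: "complex mat \<Rightarrow> bool" where
  "unit_upper_triangular A \<longleftrightarrow> dim_row A = dim_col A \<and> upper_triangular A
     \<and> (\<forall>i < dim_row A. A $$ (i,i) = 1)"

definition mrank :: "complex mat \<Rightarrow> nat" where
  "mrank A = vec_space.rank (dim_row A) (A :: complex mat)"

definition full_col_rank :: "complex mat \<Rightarrow> bool" where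
  "full_col_rank A \<longleftrightarrow> mrank A = dim_col A"

definition full_row_rank :: "complex mat \<Rightarrow> bool" where
  "full_row_rank A \<longleftrightarrow> mrank A = dim_row A"

definition psum :: "(nat \<Rightarrow> nat) \<Rightarrow> nat \<Rightarrow> nat" where
  "psum s i = (\<Sum>j = 1..i. s j)"

definition sub_block :: "'a mat \<Rightarrow> nat \<Rightarrow> nat \<Rightarrow> nat \<Rightarrow> nat \<Rightarrow> 'a mat" where
  "sub_block M r0 c0 r c = mat r c (\<lambda>(i,j). M $$ (r0 + i, c0 + j))"

text \<open>block (i,j) (1-based) for block row sizes s and block column sizes t\<close>
definition blk :: "'a mat \<Rightarrow> (nat \<Rightarrow> nat) \<Rightarrow> (nat \<Rightarrow> nat) \<Rightarrow> nat \<Rightarrow> nat \<Rightarrow> 'a mat" where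
  "blk M s t i j = sub_block M (psum s (i - 1)) (psum t (j - 1)) (s i) (t j)"

definition lead_cols :: "complex mat \<Rightarrow> nat \<Rightarrow> complex mat" where
  "lead_cols M r = M * mat (dim_col M) r (\<lambda>(i,j). if i = j then 1 else 0)"

definition col_image :: "complex mat \<Rightarrow> complex vec set" where
  "col_image M = {M *\<^sub>v x | x. x \<in> carrier_vec (dim_col M)}"

fun wongU :: "complex mat \<Rightarrow> complex mat \<Rightarrow> nat \<Rightarrow> complex vec set" where
  "wongU L0 L1 0 = {0\<^sub>v (dim_row L0)}"
| "wongU L0 L1 (Suc i) =
     {L1 *\<^sub>v v | v. v \<in> carrier_vec (dim_col L0) \<and> L0 *\<^sub>v v \<in> wongU L0 L1 i}"

definition wongV :: "complex mat \<Rightarrow> complex mat \<Rightarrow> nat \<Rightarrow> complex vec set" where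
  "wongV L0 L1 i = {v \<in> carrier_vec (dim_col L0). L0 *\<^sub>v v \<in> wongU L0 L1 (i - 1)}"

end

theory Submission
  imports Defs
begin

(*
  Put A = U^* L0 V, E = U^* L1 V, and let W_p = lead_vecs _ p be the vectors whose entries
  from position p on vanish, i.e. the image of [I_p; 0]. Wong sequences are transported by
  equivalences of pencils, so it suffices to compute them for (A, E). The preimage under A of
  W_(sigma_(i-1)) is W_(tau_i): the zero diagonal blocks give one inclusion, and for the other
  the full column rank of A_r and of the stairs A_(j,j+1) kills the trailing coordinates of the
  preimage block by block, starting from the last. Dually E maps W_(tau_i) onto W_(sigma_i), by
  induction on i, using the full row rank of the diagonal blocks E_(i,i). Hence U_i = U W_(sigma_i)
  and V_i = V W_(tau_i). Finally U_d S and V_d T fix these spaces, because both factors are block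
  upper triangular with invertible leading blocks.
*)

section \<open>Block partitions\<close>

lemma psum_mono: "i \<le> j \<Longrightarrow> psum s i \<le> psum s j"
  unfolding psum_def by (rule sum_mono2) auto

lemma psum_Suc: "psum s (Suc i) = psum s i + s (Suc i)"
  unfolding psum_def by simp

lemma psum_pred: "1 \<le> i \<Longrightarrow> psum s i = psum s (i - 1) + s i"
  by (cases i) (auto simp: psum_Suc)

lemma psum_locate:
  assumes "l < psum s k"
  shows "\<exists>b \<in> {1..k}. psum s (b - 1) \<le> l \<and> l < psum s b"
  using assms
proof (induction k)
  case 0
  then show ?case by (simp add: psum_def)
next
  case (Suc k)
  show ?case
  proof (cases "l < psum s k")
    case True
    then show ?thesis using Suc.IH by fastforce
  next
    case False
    then show ?thesis using Suc.prems by (intro bexI[of _ "Suc k"]) auto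
  qed
qed

lemma sub_block_index [simp]:
  "i < r \<Longrightarrow> j < c \<Longrightarrow> sub_block M r0 c0 r c $$ (i, j) = M $$ (r0 + i, c0 + j)"
  unfolding sub_block_def by simp

lemma dim_sub_block [simp]:
  "dim_row (sub_block M r0 c0 r c) = r" "dim_col (sub_block M r0 c0 r c) = c"
  unfolding sub_block_def by simp_all

lemma sub_block_carrier [simp]: "sub_block M r0 c0 r c \<in> carrier_mat r c"
  by (simp add: carrier_matI)

lemma sub_block_zero_entry:
  assumes "sub_block M r0 c0 r c = 0\<^sub>m r c" "r0 \<le> i" "i < r0 + r" "c0 \<le> j" "j < c0 + c"
  shows "M $$ (i, j) = 0"
proof -
  have "sub_block M r0 c0 r c $$ (i - r0, j - c0) = 0" using assms by simp
  then show ?thesis using assms(2-5) by simp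
qed

section \<open>Vectors supported on leading coordinates\<close>

definition lead_vecs :: "nat \<Rightarrow> nat \<Rightarrow> 'a :: zero vec set" where
  "lead_vecs d p = {x \<in> carrier_vec d. \<forall>j < d. p \<le> j \<longrightarrow> x $ j = 0}"

lemma lead_vecs_carrier: "x \<in> lead_vecs d p \<Longrightarrow> x \<in> carrier_vec d"
  unfolding lead_vecs_def by simp

lemma lead_vecs_0: "lead_vecs d 0 = {0\<^sub>v d}"
  unfolding lead_vecs_def by (auto intro!: eq_vecI)

lemma lead_vecs_full: "d \<le> p \<Longrightarrow> lead_vecs d p = carrier_vec d"
  unfolding lead_vecs_def by auto

lemma lead_vecs_mono: "p \<le> q \<Longrightarrow> lead_vecs d p \<subseteq> lead_vecs d q"
  unfolding lead_vecs_def by auto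

definition lower_left_zero :: "'a :: zero mat \<Rightarrow> nat \<Rightarrow> nat \<Rightarrow> bool" where
  "lower_left_zero M q p \<longleftrightarrow>
     (\<forall>r c. r < dim_row M \<longrightarrow> c < dim_col M \<longrightarrow> q \<le> r \<longrightarrow> c < p \<longrightarrow> M $$ (r, c) = 0)"

lemma lower_left_zero_mono:
  "lower_left_zero M q p \<Longrightarrow> q \<le> q' \<Longrightarrow> p' \<le> p \<Longrightarrow> lower_left_zero M q' p'"
  unfolding lower_left_zero_def by auto

lemma lower_left_zero_mult_lead_vecs:
  assumes M: "M \<in> carrier_mat d e" and low: "lower_left_zero M q p" and x: "x \<in> lead_vecs e p"
  shows "M *\<^sub>v x \<in> lead_vecs d q"
proof -
  have xc: "x \<in> carrier_vec e" using x by (rule lead_vecs_carrier)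
  have "(M *\<^sub>v x) $ r = 0" if "r < d" "q \<le> r" for r
  proof -
    have "(M *\<^sub>v x) $ r = (\<Sum>c = 0..<e. M $$ (r, c) * x $ c)"
      using M xc that by (simp add: scalar_prod_def)
    also have "\<dots> = 0"
    proof (intro sum.neutral ballI)
      fix c assume "c \<in> {0..<e}"
      then show "M $$ (r, c) * x $ c = 0"
        using low M x that by (cases "c < p") (auto simp: lower_left_zero_def lead_vecs_def)
    qed
    finally show ?thesis .
  qed
  then show ?thesis using M unfolding lead_vecs_def by (auto intro: carrier_vecI)
qed

lemma blk_zero_imp_lower_left_zero:
  assumes M: "M \<in> carrier_mat m n" and a: "a \<le> k"
    and low: "sub_block M (psum s k) 0 (m - psum s k) (psum t k) = 0\<^sub>m (m - psum s k) (psum t k)"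
    and blocks: "\<And>i j. i \<in> {1..k} \<Longrightarrow> j \<in> {1..k} \<Longrightarrow> b < i \<Longrightarrow> j \<le> a \<Longrightarrow>
                   blk M s t i j = 0\<^sub>m (s i) (t j)"
  shows "lower_left_zero M (psum s b) (psum t a)"
  unfolding lower_left_zero_def
proof (intro allI impI)
  fix r c assume r: "r < dim_row M" and "c < dim_col M" and rb: "psum s b \<le> r" and c: "c < psum t a"
  have "c < psum t k" using c psum_mono[OF a] by (rule less_le_trans)
  then obtain j where j: "j \<in> {1..k}" "psum t (j - 1) \<le> c" "c < psum t j"
    using psum_locate by blast
  have "j \<le> a"
  proof (rule ccontr)
    assume "\<not> j \<le> a"
    then have "psum t a \<le> psum t (j - 1)" by (intro psum_mono) simp
    with j c show False by simp
  qed
  show "M $$ (r, c) = 0"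
  proof (cases "psum s k \<le> r")
    case True
    then show ?thesis
      using sub_block_zero_entry[OF low] r M \<open>c < psum t k\<close> by simp
  next
    case False
    then obtain i where i: "i \<in> {1..k}" "psum s (i - 1) \<le> r" "r < psum s i"
      using psum_locate[of r s k] by auto
    have "b < i"
    proof (rule ccontr)
      assume "\<not> b < i"
      then have "psum s i \<le> psum s b" by (intro psum_mono) simp
      with i rb show False by simp
    qed
    show ?thesis
      using sub_block_zero_entry[OF blocks[OF i(1) j(1) \<open>b < i\<close> \<open>j \<le> a\<close>, unfolded blk_def]]
        i j psum_pred[of i s] psum_pred[of j t]
      by simp
  qed
qed

lemma image_mult_mat_vec:
  assumes "A \<in> carrier_mat d e" "B \<in> carrier_mat e f" "X \<subseteq> carrier_vec f"
  shows "(\<lambda>x. (A * B) *\<^sub>v x) ` X = (\<lambda>x. A *\<^sub>v x) ` (\<lambda>x. B *\<^sub>v x) ` X"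
  unfolding image_image using assms by (intro image_cong) auto

lemma col_image_lead_cols:
  assumes M: "M \<in> carrier_mat d e" and p: "p \<le> e"
  shows "col_image (lead_cols M p) = (\<lambda>x. M *\<^sub>v x) ` lead_vecs e p"
proof -
  define P :: "complex mat" where "P = mat e p (\<lambda>(i, j). if i = j then 1 else 0)"
  have P: "P \<in> carrier_mat e p" by (simp add: P_def)
  have Px: "P *\<^sub>v x = vec e (\<lambda>i. if i < p then x $ i else 0)" if x: "x \<in> carrier_vec p" for x
  proof (rule eq_vecI)
    fix i assume "i < dim_vec (vec e (\<lambda>i. if i < p then x $ i else 0))"
    then have i: "i < e" by simp
    have "(P *\<^sub>v x) $ i = (\<Sum>c = 0..<p. (if i = c then 1 else 0) * x $ c)"
      using x i by (simp add: P_def scalar_prod_def)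
    also have "\<dots> = (\<Sum>c = 0..<p. if c = i then x $ i else 0)"
      by (rule sum.cong) auto
    also have "\<dots> = (if i < p then x $ i else 0)" by (simp add: sum.delta)
    finally show "(P *\<^sub>v x) $ i = vec e (\<lambda>i. if i < p then x $ i else 0) $ i" using i by simp
  qed (simp add: P_def)
  have "(\<lambda>x. P *\<^sub>v x) ` carrier_vec p = lead_vecs e p"
  proof
    show "(\<lambda>x. P *\<^sub>v x) ` carrier_vec p \<subseteq> lead_vecs e p"
      using Px by (auto simp: lead_vecs_def)
    show "lead_vecs e p \<subseteq> (\<lambda>x. P *\<^sub>v x) ` carrier_vec p"
    proof
      fix w :: "complex vec" assume w: "w \<in> lead_vecs e p"
      have "P *\<^sub>v vec p (\<lambda>i. w $ i) = w"
        using Px[of "vec p (\<lambda>i. w $ i)"] w p by (auto simp: lead_vecs_def intro!: eq_vecI)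
      then show "w \<in> (\<lambda>x. P *\<^sub>v x) ` carrier_vec p" by (metis image_eqI vec_carrier)
    qed
  qed
  moreover have "col_image (lead_cols M p) = (\<lambda>x. (M * P) *\<^sub>v x) ` carrier_vec p"
    using M P unfolding lead_cols_def col_image_def by (auto simp: P_def simp del: assoc_mult_mat_vec)
  moreover note image_mult_mat_vec[OF M P subset_refl]
  ultimately show ?thesis by simp
qed

section \<open>Blocks of full rank\<close>

lemma (in vec_space) rank_le_card_set_cols:
  assumes "A \<in> carrier_mat n nc"
  shows "rank A \<le> card (set (cols A))"
proof -
  obtain S where S: "maximal S (\<lambda>T. T \<subseteq> set (cols A) \<and> lin_indpt T)"
    using maximal_exists[of "\<lambda>T. T \<subseteq> set (cols A) \<and> lin_indpt T" "card (set (cols A))" "{}"]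
    by (meson List.finite_set card_mono empty_iff empty_subsetI finite_lin_indpt2 rev_finite_subset)
  then have "card S \<le> card (set (cols A))" by (simp add: card_mono maximal_def)
  then show ?thesis using rank_card_indpt[OF assms S] by simp
qed

lemma full_col_rank_mult_vec_eq_0:
  assumes A: "A \<in> carrier_mat r c" and rk: "full_col_rank A"
    and x: "x \<in> carrier_vec c" and Ax: "A *\<^sub>v x = 0\<^sub>v r"
  shows "x = 0\<^sub>v c"
proof -
  interpret vec_space "TYPE(complex)" r .
  have rank: "rank A = c" using rk A unfolding full_col_rank_def mrank_def by auto
  have "distinct (cols A)"
  proof (rule ccontr)
    assume "\<not> distinct (cols A)"
    then have "card (set (cols A)) < length (cols A)"
      using card_distinct card_length le_neq_implies_less by blast
    then have "card (set (cols A)) < c" using A by simp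
    with rank_le_card_set_cols[OF A] rank show False by simp
  qed
  then have "lin_indpt (set (cols A))" using full_rank_lin_indpt[OF A rank] by blast
  show ?thesis
  proof (rule ccontr)
    assume "x \<noteq> 0\<^sub>v c"
    from lin_depI[OF A x this Ax \<open>distinct (cols A)\<close>] \<open>lin_indpt (set (cols A))\<close> show False by simp
  qed
qed

lemma full_row_rank_solvable:
  assumes A: "A \<in> carrier_mat r c" and rk: "full_row_rank A" and y: "y \<in> carrier_vec r"
  shows "\<exists>x \<in> carrier_vec c. A *\<^sub>v x = y"
proof -
  interpret vec_space "TYPE(complex)" r .
  obtain S where S: "maximal S (\<lambda>T. T \<subseteq> set (cols A) \<and> lin_indpt T)"
    using maximal_exists[of "\<lambda>T. T \<subseteq> set (cols A) \<and> lin_indpt T" "card (set (cols A))" "{}"]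
    by (meson List.finite_set card_mono empty_iff empty_subsetI finite_lin_indpt2 rev_finite_subset)
  have card: "card S = r"
    using rank_card_indpt[OF A S] rk A unfolding full_row_rank_def mrank_def by simp
  have cols: "set (cols A) \<subseteq> carrier_vec r" using A cols_dim by blast
  have S_sub: "S \<subseteq> set (cols A)" and indpt: "lin_indpt S" using S unfolding maximal_def by auto
  have "basis S"
    by (rule dim_li_is_basis) (use S_sub cols indpt card dim_is_n finite_subset in auto)
  then have "y \<in> span S" using y unfolding basis_def by simp
  then have "y \<in> span (set (cols A))" using span_is_monotone[OF S_sub] by blast
  then obtain f where "y = lincomb_list f (cols A)"
    using span_list_as_span[OF cols] unfolding span_list_def by auto
  also have "\<dots> = mat_of_cols r (cols A) *\<^sub>v vec (length (cols A)) f"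
    by (rule lincomb_list_as_mat_mult) (use cols in auto)
  also have "\<dots> = A *\<^sub>v vec c f" using A mat_of_cols_cols[of A] by auto
  finally show ?thesis by auto
qed

lemma det_nonzero_full_row_rank:
  assumes "A \<in> carrier_mat d d" and "det A \<noteq> 0"
  shows "full_row_rank A"
  using vec_space.det_rank_iff[OF assms(1)] assms
  unfolding full_row_rank_def mrank_def by simp

lemma sub_block_mult_vec_index:
  assumes M: "M \<in> carrier_mat m n" and x: "x \<in> carrier_vec n"
    and "r0 + h \<le> m" "c0 + w \<le> n" and i: "i < h"
    and outside: "\<And>c. c < n \<Longrightarrow> c < c0 \<or> c0 + w \<le> c \<Longrightarrow> M $$ (r0 + i, c) * x $ c = 0"
  shows "(sub_block M r0 c0 h w *\<^sub>v vec w (\<lambda>j. x $ (c0 + j))) $ i = (M *\<^sub>v x) $ (r0 + i)"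
proof -
  have "(M *\<^sub>v x) $ (r0 + i) = (\<Sum>c = 0..<n. M $$ (r0 + i, c) * x $ c)"
    using M x assms(3) i by (simp add: scalar_prod_def)
  also have "\<dots> = (\<Sum>c = c0..<c0 + w. M $$ (r0 + i, c) * x $ c)"
    by (rule sum.mono_neutral_right) (use assms(4) outside in auto)
  also have "\<dots> = (\<Sum>j = 0..<w. M $$ (r0 + i, c0 + j) * x $ (c0 + j))"
    using sum.shift_bounds_nat_ivl[of _ 0 c0 w] by (simp add: add.commute)
  also have "\<dots> = (sub_block M r0 c0 h w *\<^sub>v vec w (\<lambda>j. x $ (c0 + j))) $ i"
    using i by (simp add: sub_block_def scalar_prod_def)
  finally show ?thesis by simp
qed

lemma full_col_rank_block_preimage_step:
  assumes M: "M \<in> carrier_mat m n" and rows: "r0 + h \<le> m" and cols: "c0 + w \<le> n"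
    and low: "lower_left_zero M r0 c0" and rk: "full_col_rank (sub_block M r0 c0 h w)"
    and x: "x \<in> lead_vecs n (c0 + w)" and Mx: "M *\<^sub>v x \<in> lead_vecs m r0"
  shows "x \<in> lead_vecs n c0"
proof -
  have xc: "x \<in> carrier_vec n" using x by (rule lead_vecs_carrier)
  define y where "y = vec w (\<lambda>j. x $ (c0 + j))"
  have "sub_block M r0 c0 h w *\<^sub>v y = 0\<^sub>v h"
  proof (rule eq_vecI)
    fix i assume "i < dim_vec (0\<^sub>v h :: complex vec)"
    then have i: "i < h" by simp
    have "(sub_block M r0 c0 h w *\<^sub>v y) $ i = (M *\<^sub>v x) $ (r0 + i)"
      unfolding y_def
      by (rule sub_block_mult_vec_index[OF M xc rows cols i])
         (use low x M rows i in \<open>auto simp: lower_left_zero_def lead_vecs_def\<close>)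
    also have "\<dots> = 0" using Mx i rows by (simp add: lead_vecs_def)
    finally show "(sub_block M r0 c0 h w *\<^sub>v y) $ i = 0\<^sub>v h $ i" using i by simp
  qed simp
  then have "y = 0\<^sub>v w"
    using full_col_rank_mult_vec_eq_0[OF sub_block_carrier rk] by (simp add: y_def)
  have "x $ c = 0" if c: "c0 \<le> c" "c < c0 + w" for c
  proof -
    have "x $ c = y $ (c - c0)" using c by (auto simp: y_def)
    also have "\<dots> = 0" using \<open>y = 0\<^sub>v w\<close> c by simp
    finally show ?thesis .
  qed
  then show ?thesis using x unfolding lead_vecs_def by (auto simp: not_less)
qed

lemma full_row_rank_block_image_step:
  assumes M: "M \<in> carrier_mat m n" and rows: "r0 + h \<le> m" and cols: "c0 + w \<le> n"
    and low: "lower_left_zero M (r0 + h) (c0 + w)" and rk: "full_row_rank (sub_block M r0 c0 h w)"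
    and y: "y \<in> lead_vecs m (r0 + h)"
  shows "\<exists>x \<in> lead_vecs n (c0 + w). y - M *\<^sub>v x \<in> lead_vecs m r0"
proof -
  have yc: "y \<in> carrier_vec m" using y by (rule lead_vecs_carrier)
  obtain z where z: "z \<in> carrier_vec w" "sub_block M r0 c0 h w *\<^sub>v z = vec h (\<lambda>i. y $ (r0 + i))"
    using full_row_rank_solvable[OF sub_block_carrier rk, of "vec h (\<lambda>i. y $ (r0 + i))"] by auto
  define x where "x = vec n (\<lambda>c. if c0 \<le> c \<and> c < c0 + w then z $ (c - c0) else 0)"
  have x: "x \<in> lead_vecs n (c0 + w)" unfolding x_def lead_vecs_def by auto
  have xc: "x \<in> carrier_vec n" using x by (rule lead_vecs_carrier)
  have seg: "vec w (\<lambda>j. x $ (c0 + j)) = z" using z(1) cols by (auto simp: x_def)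
  have Mx: "(M *\<^sub>v x) $ (r0 + i) = y $ (r0 + i)" if i: "i < h" for i
  proof -
    have "(M *\<^sub>v x) $ (r0 + i) = (sub_block M r0 c0 h w *\<^sub>v vec w (\<lambda>j. x $ (c0 + j))) $ i"
      by (rule sub_block_mult_vec_index[OF M xc rows cols i, symmetric]) (auto simp: x_def)
    also have "\<dots> = y $ (r0 + i)" using seg z(2) i by simp
    finally show ?thesis .
  qed
  have "(y - M *\<^sub>v x) $ r = 0" if "r < m" "r0 \<le> r" for r
  proof (cases "r < r0 + h")
    case True
    then show ?thesis using Mx[of "r - r0"] that yc M by simp
  next
    case False
    then show ?thesis
      using lower_left_zero_mult_lead_vecs[OF M low x] y that yc M by (simp add: lead_vecs_def)
  qed
  then have "y - M *\<^sub>v x \<in> lead_vecs m r0"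
    using yc M unfolding lead_vecs_def by (auto intro: carrier_vecI)
  with x show ?thesis by blast
qed

section \<open>Block triangular matrices\<close>

lemma lead_vecs_image_eq:
  assumes M: "M \<in> carrier_mat d d" and p: "p \<le> d"
    and low: "lower_left_zero M p p" and rk: "full_row_rank (sub_block M 0 0 p p)"
  shows "(\<lambda>x. M *\<^sub>v x) ` lead_vecs d p = lead_vecs d p"
proof
  show "(\<lambda>x. M *\<^sub>v x) ` lead_vecs d p \<subseteq> lead_vecs d p"
    using lower_left_zero_mult_lead_vecs[OF M low] by blast
  show "lead_vecs d p \<subseteq> (\<lambda>x. M *\<^sub>v x) ` lead_vecs d p"
  proof
    fix y :: "complex vec" assume y: "y \<in> lead_vecs d p"
    then obtain x where x: "x \<in> lead_vecs d p" and "y - M *\<^sub>v x \<in> lead_vecs d 0"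
      using full_row_rank_block_image_step[OF M _ _ _ rk, of y] p low by auto
    then have diff: "y - M *\<^sub>v x = 0\<^sub>v d" by (simp add: lead_vecs_0)
    have "y = M *\<^sub>v x"
    proof (rule eq_vecI)
      fix i assume "i < dim_vec (M *\<^sub>v x)"
      then show "y $ i = (M *\<^sub>v x) $ i"
        using arg_cong[OF diff, of "\<lambda>v. v $ i"] M y by (simp add: lead_vecs_def)
    qed (use M y in \<open>simp add: lead_vecs_def\<close>)
    with x show "y \<in> (\<lambda>x. M *\<^sub>v x) ` lead_vecs d p" by blast
  qed
qed

lemma unit_upper_triangular_image_lead_vecs:
  assumes S: "S \<in> carrier_mat d d" and uut: "unit_upper_triangular S" and p: "p \<le> d"
  shows "(\<lambda>x. S *\<^sub>v x) ` lead_vecs d p = lead_vecs d p"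
proof (rule lead_vecs_image_eq[OF S p])
  show "lower_left_zero S p p"
    using uut unfolding unit_upper_triangular_def upper_triangular_def lower_left_zero_def by auto
  have "upper_triangular (sub_block S 0 0 p p)"
    using uut p S unfolding unit_upper_triangular_def upper_triangular_def by auto
  then have "det (sub_block S 0 0 p p) = prod_list (diag_mat (sub_block S 0 0 p p))"
    by (rule det_upper_triangular[OF _ sub_block_carrier])
  also have "diag_mat (sub_block S 0 0 p p) = replicate p 1"
    using uut p S unfolding unit_upper_triangular_def diag_mat_def by (auto intro!: nth_equalityI)
  finally have "det (sub_block S 0 0 p p) = 1" by simp
  then show "full_row_rank (sub_block S 0 0 p p)"
    using det_nonzero_full_row_rank[OF sub_block_carrier] by simp
qed

lemma sub_block_mult_lower_left_zero:
  assumes A: "A \<in> carrier_mat e d" and B: "B \<in> carrier_mat d f"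
    and p: "p \<le> d" "p \<le> e" "p \<le> f" and low: "lower_left_zero B p p"
  shows "sub_block (A * B) 0 0 p p = sub_block A 0 0 p p * sub_block B 0 0 p p"
proof (rule eq_matI)
  fix a b assume "a < dim_row (sub_block A 0 0 p p * sub_block B 0 0 p p)"
    and "b < dim_col (sub_block A 0 0 p p * sub_block B 0 0 p p)"
  then have a: "a < p" and b: "b < p" by simp_all
  have "sub_block (A * B) 0 0 p p $$ (a, b) = (\<Sum>l = 0..<d. A $$ (a, l) * B $$ (l, b))"
    using A B a b p by (simp add: scalar_prod_def)
  also have "\<dots> = (\<Sum>l = 0..<p. A $$ (a, l) * B $$ (l, b))"
    by (rule sum.mono_neutral_right) (use low B b p in \<open>auto simp: lower_left_zero_def\<close>)
  also have "\<dots> = (sub_block A 0 0 p p * sub_block B 0 0 p p) $$ (a, b)"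
    using a b by (simp add: scalar_prod_def)
  finally show "sub_block (A * B) 0 0 p p $$ (a, b) = (sub_block A 0 0 p p * sub_block B 0 0 p p) $$ (a, b)" .
qed simp_all

lemma unitary_image_lead_vecs:
  assumes M: "unitary_mat M d" and p: "p \<le> d" and low: "lower_left_zero M p p"
  shows "(\<lambda>x. M *\<^sub>v x) ` lead_vecs d p = lead_vecs d p"
proof -
  have Mc: "M \<in> carrier_mat d d" and MM: "mat_adjoint M * M = 1\<^sub>m d"
    using M unfolding unitary_mat_def by auto
  have Hc: "mat_adjoint M \<in> carrier_mat d d" using Mc unfolding mat_adjoint_def by auto
  have "sub_block (mat_adjoint M) 0 0 p p * sub_block M 0 0 p p = sub_block (1\<^sub>m d) 0 0 p p"
    using sub_block_mult_lower_left_zero[OF Hc Mc p p p low] MM by simp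
  also have "\<dots> = 1\<^sub>m p" using p by (intro eq_matI) auto
  finally have "det (sub_block (mat_adjoint M) 0 0 p p) * det (sub_block M 0 0 p p) = 1"
    by (metis det_mult[OF sub_block_carrier sub_block_carrier] det_one)
  then have "full_row_rank (sub_block M 0 0 p p)"
    using det_nonzero_full_row_rank[OF sub_block_carrier] by force
  then show ?thesis by (rule lead_vecs_image_eq[OF Mc p low])
qed

lemma col_image_lead_cols_mult_triangular:
  assumes U: "U \<in> carrier_mat m m" and Ud: "unitary_mat Ud m"
    and S: "S \<in> carrier_mat m m" and S_uut: "unit_upper_triangular S"
    and pm: "psum s k \<le> m"
    and Ud_ll: "sub_block Ud (psum s k) 0 (m - psum s k) (psum s k) = 0\<^sub>m (m - psum s k) (psum s k)"
    and Ud_tri: "\<And>i j. i \<in> {1..k} \<Longrightarrow> j \<in> {1..k} \<Longrightarrow> j < i \<Longrightarrow> blk Ud s s i j = 0\<^sub>m (s i) (s j)"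
    and i: "i \<le> k"
  shows "col_image (lead_cols (U * Ud * S) (psum s i)) = (\<lambda>x. U *\<^sub>v x) ` lead_vecs m (psum s i)"
proof -
  have Udc: "Ud \<in> carrier_mat m m" using Ud unfolding unitary_mat_def by simp
  have p: "psum s i \<le> m" using psum_mono[OF i, of s] pm by simp
  have "lower_left_zero Ud (psum s i) (psum s i)"
    by (rule blk_zero_imp_lower_left_zero[OF Udc i Ud_ll]) (use Ud_tri in auto)
  then have Ud_fix: "(\<lambda>x. Ud *\<^sub>v x) ` lead_vecs m (psum s i) = lead_vecs m (psum s i)"
    by (rule unitary_image_lead_vecs[OF Ud p])
  have S_fix: "(\<lambda>x. S *\<^sub>v x) ` lead_vecs m (psum s i) = lead_vecs m (psum s i)"
    by (rule unit_upper_triangular_image_lead_vecs[OF S S_uut p])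
  have USc: "U * Ud * S \<in> carrier_mat m m" using U Udc S by (intro mult_carrier_mat)
  have sub: "lead_vecs m (psum s i) \<subseteq> carrier_vec m" using lead_vecs_carrier by blast
  have "col_image (lead_cols (U * Ud * S) (psum s i)) = (\<lambda>x. (U * Ud * S) *\<^sub>v x) ` lead_vecs m (psum s i)"
    by (rule col_image_lead_cols[OF USc p])
  also have "\<dots> = (\<lambda>x. (U * Ud) *\<^sub>v x) ` (\<lambda>x. S *\<^sub>v x) ` lead_vecs m (psum s i)"
    by (rule image_mult_mat_vec[OF mult_carrier_mat[OF U Udc] S sub])
  also have "\<dots> = (\<lambda>x. U *\<^sub>v x) ` (\<lambda>x. Ud *\<^sub>v x) ` lead_vecs m (psum s i)"
    unfolding S_fix by (rule image_mult_mat_vec[OF U Udc sub])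
  also have "\<dots> = (\<lambda>x. U *\<^sub>v x) ` lead_vecs m (psum s i)" unfolding Ud_fix ..
  finally show ?thesis .
qed

section \<open>Staircase pencils\<close>

lemma staircase_preimage_subset:
  assumes A: "A \<in> carrier_mat m n" and pm: "psum s k \<le> m" and qn: "psum t k \<le> n"
    and low: "\<And>j. j \<in> {1..k} \<Longrightarrow> lower_left_zero A (psum s (j - 1)) (psum t j)"
    and Ar: "full_col_rank (sub_block A (psum s k) (psum t k) (m - psum s k) (n - psum t k))"
    and super: "\<And>j. j \<in> {1..<k} \<Longrightarrow> full_col_rank (blk A s t j (j + 1))"
    and i: "i \<in> {1..k}" and x: "x \<in> carrier_vec n" and Ax: "A *\<^sub>v x \<in> lead_vecs m (psum s (i - 1))"
  shows "x \<in> lead_vecs n (psum t i)"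
proof -
  have Ax_le: "A *\<^sub>v x \<in> lead_vecs m (psum s j)" if "i - 1 \<le> j" for j
    using Ax lead_vecs_mono[OF psum_mono[OF that]] by blast
  show ?thesis
  proof (rule inc_induct[of i k "\<lambda>j. x \<in> lead_vecs n (psum t j)"])
    show "i \<le> k" using i by simp
    show "x \<in> lead_vecs n (psum t k)"
    proof (rule full_col_rank_block_preimage_step[OF A _ _ _ Ar])
      show "lower_left_zero A (psum s k) (psum t k)"
        using lower_left_zero_mono[OF low[of k]] psum_mono[of "k - 1" k s] i by auto
      show "x \<in> lead_vecs n (psum t k + (n - psum t k))"
        using x qn by (simp add: lead_vecs_full)
      show "A *\<^sub>v x \<in> lead_vecs m (psum s k)" by (rule Ax_le) (use i in auto)
    qed (use pm qn in simp_all)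
  next
    fix j assume j: "i \<le> j" "j < k" and IH: "x \<in> lead_vecs n (psum t (Suc j))"
    have j1: "1 \<le> j" using i j by simp
    show "x \<in> lead_vecs n (psum t j)"
    proof (rule full_col_rank_block_preimage_step[OF A])
      show "psum s (j - 1) + s j \<le> m"
        using psum_pred[OF j1, of s] psum_mono[of j k s] j pm by simp
      show "psum t j + t (Suc j) \<le> n"
        using psum_Suc[of t j] psum_mono[of "Suc j" k t] j qn by simp
      show "lower_left_zero A (psum s (j - 1)) (psum t j)" using low j1 j by simp
      show "full_col_rank (sub_block A (psum s (j - 1)) (psum t j) (s j) (t (Suc j)))"
        using super[of j] j1 j by (simp add: blk_def)
      show "x \<in> lead_vecs n (psum t j + t (Suc j))" using IH by (simp add: psum_Suc)
      show "A *\<^sub>v x \<in> lead_vecs m (psum s (j - 1))" using Ax_le j by simp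
    qed
  qed
qed

lemma staircase_preimage:
  assumes A: "A \<in> carrier_mat m n" and pm: "psum s k \<le> m" and qn: "psum t k \<le> n"
    and low: "\<And>j. j \<in> {1..k} \<Longrightarrow> lower_left_zero A (psum s (j - 1)) (psum t j)"
    and Ar: "full_col_rank (sub_block A (psum s k) (psum t k) (m - psum s k) (n - psum t k))"
    and super: "\<And>j. j \<in> {1..<k} \<Longrightarrow> full_col_rank (blk A s t j (j + 1))"
    and i: "i \<in> {1..k}"
  shows "{x \<in> carrier_vec n. A *\<^sub>v x \<in> lead_vecs m (psum s (i - 1))} = lead_vecs n (psum t i)"
  using lower_left_zero_mult_lead_vecs[OF A low[OF i]] lead_vecs_carrier
    staircase_preimage_subset[OF A pm qn low Ar super i]
  by blast

lemma staircase_image: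
  assumes E: "E \<in> carrier_mat m n" and pm: "psum s k \<le> m" and qn: "psum t k \<le> n"
    and low: "\<And>j. j \<le> k \<Longrightarrow> lower_left_zero E (psum s j) (psum t j)"
    and diag: "\<And>j. j \<in> {1..k} \<Longrightarrow> full_row_rank (blk E s t j j)"
    and j: "j \<le> k"
  shows "(\<lambda>x. E *\<^sub>v x) ` lead_vecs n (psum t j) = lead_vecs m (psum s j)"
  using j
proof (induction j)
  case 0
  have "E *\<^sub>v 0\<^sub>v n = 0\<^sub>v m" using E by auto
  then show ?case by (simp add: psum_def lead_vecs_0)
next
  case (Suc j)
  show ?case
  proof
    show "(\<lambda>x. E *\<^sub>v x) ` lead_vecs n (psum t (Suc j)) \<subseteq> lead_vecs m (psum s (Suc j))"
      using lower_left_zero_mult_lead_vecs[OF E low[OF Suc.prems]] by blast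
    show "lead_vecs m (psum s (Suc j)) \<subseteq> (\<lambda>x. E *\<^sub>v x) ` lead_vecs n (psum t (Suc j))"
    proof
      fix y :: "complex vec" assume y: "y \<in> lead_vecs m (psum s (Suc j))"
      have "\<exists>x1 \<in> lead_vecs n (psum t j + t (Suc j)). y - E *\<^sub>v x1 \<in> lead_vecs m (psum s j)"
      proof (rule full_row_rank_block_image_step[OF E])
        show "psum s j + s (Suc j) \<le> m" "psum t j + t (Suc j) \<le> n"
          using psum_mono[OF Suc.prems, of s] psum_mono[OF Suc.prems, of t] pm qn
          by (simp_all add: psum_Suc)
        show "lower_left_zero E (psum s j + s (Suc j)) (psum t j + t (Suc j))"
          using low[OF Suc.prems] by (simp add: psum_Suc)
        show "full_row_rank (sub_block E (psum s j) (psum t j) (s (Suc j)) (t (Suc j)))"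
          using diag[of "Suc j"] Suc.prems by (simp add: blk_def)
        show "y \<in> lead_vecs m (psum s j + s (Suc j))" using y by (simp add: psum_Suc)
      qed
      then obtain x1 where x1: "x1 \<in> lead_vecs n (psum t (Suc j))"
        and rest: "y - E *\<^sub>v x1 \<in> lead_vecs m (psum s j)"
        by (auto simp: psum_Suc)
      obtain x0 where x0: "x0 \<in> lead_vecs n (psum t j)" and Ex0: "E *\<^sub>v x0 = y - E *\<^sub>v x1"
        using rest Suc.IH Suc.prems by (metis Suc_leD imageE)
      have x0c: "x0 \<in> carrier_vec n" and x1c: "x1 \<in> carrier_vec n" and yc: "y \<in> carrier_vec m"
        using x0 x1 y lead_vecs_carrier by blast+
      have "E *\<^sub>v (x0 + x1) = (y - E *\<^sub>v x1) + E *\<^sub>v x1"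
        using E x0c x1c by (simp add: mult_add_distrib_mat_vec Ex0)
      also have "\<dots> = y" using E yc by (intro eq_vecI) auto
      finally have "E *\<^sub>v (x0 + x1) = y" .
      moreover have "x0 + x1 \<in> lead_vecs n (psum t (Suc j))"
        using x0 x1 lead_vecs_mono[of "psum t j" "psum t (Suc j)" n]
        by (auto simp: lead_vecs_def psum_Suc)
      ultimately show "y \<in> (\<lambda>x. E *\<^sub>v x) ` lead_vecs n (psum t (Suc j))" by blast
    qed
  qed
qed


section \<open>Wong sequences\<close>

lemma mem_image_mult_mat_vec_iff:
  fixes P P' :: "'a :: semiring_1 mat"
  assumes P: "P \<in> carrier_mat m m" "P' \<in> carrier_mat m m" "P * P' = 1\<^sub>m m" "P' * P = 1\<^sub>m m"
    and W: "W \<subseteq> carrier_vec m" and w: "w \<in> carrier_vec m"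
  shows "w \<in> (\<lambda>x. P *\<^sub>v x) ` W \<longleftrightarrow> P' *\<^sub>v w \<in> W"
proof
  assume "w \<in> (\<lambda>x. P *\<^sub>v x) ` W"
  then obtain u where u: "u \<in> W" and w_eq: "w = P *\<^sub>v u" by blast
  then have uc: "u \<in> carrier_vec m" using W by blast
  have "P' *\<^sub>v w = (P' * P) *\<^sub>v u" using assoc_mult_mat_vec[OF P(2,1) uc] w_eq by simp
  also have "\<dots> = u" using P(4) uc by simp
  finally have "P' *\<^sub>v w = u" .
  with u show "P' *\<^sub>v w \<in> W" by simp
next
  assume "P' *\<^sub>v w \<in> W"
  moreover have "P *\<^sub>v (P' *\<^sub>v w) = (P * P') *\<^sub>v w" using assoc_mult_mat_vec[OF P(1,2) w] by simp
  then have "P *\<^sub>v (P' *\<^sub>v w) = w" using P(3) w by simp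
  ultimately show "w \<in> (\<lambda>x. P *\<^sub>v x) ` W" by (metis image_eqI)
qed

lemma assoc_mult_mat_vec3:
  assumes "A \<in> carrier_mat a b" "B \<in> carrier_mat b c" "C \<in> carrier_mat c d" "x \<in> carrier_vec d"
  shows "(A * B * C) *\<^sub>v x = A *\<^sub>v (B *\<^sub>v (C *\<^sub>v x))"
proof -
  have "(A * B * C) *\<^sub>v x = (A * B) *\<^sub>v (C *\<^sub>v x)"
    by (rule assoc_mult_mat_vec) (use assms in auto)
  also have "\<dots> = A *\<^sub>v (B *\<^sub>v (C *\<^sub>v x))"
    by (rule assoc_mult_mat_vec) (use assms in auto)
  finally show ?thesis .
qed

lemma wongU_carrier:
  assumes "L0 \<in> carrier_mat m n" "L1 \<in> carrier_mat m n"
  shows "wongU L0 L1 i \<subseteq> carrier_vec m"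
  using assms by (cases i) auto

lemma wongU_equivalent_pencil:
  assumes L0: "L0 \<in> carrier_mat m n" and L1: "L1 \<in> carrier_mat m n"
    and P: "P \<in> carrier_mat m m" "P' \<in> carrier_mat m m" "P * P' = 1\<^sub>m m" "P' * P = 1\<^sub>m m"
    and Q: "Q \<in> carrier_mat n n" "Q' \<in> carrier_mat n n" "Q * Q' = 1\<^sub>m n"
  shows "wongU L0 L1 i = (\<lambda>x. P *\<^sub>v x) ` wongU (P' * L0 * Q) (P' * L1 * Q) i"
proof (induction i)
  case 0
  have "P *\<^sub>v 0\<^sub>v m = 0\<^sub>v m" using P by auto
  then show ?case using L0 P by simp
next
  case (Suc i)
  define A E where "A = P' * L0 * Q" and "E = P' * L1 * Q"
  have A: "A \<in> carrier_mat m n" and E: "E \<in> carrier_mat m n"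
    using L0 L1 P Q by (auto simp: A_def E_def)
  have pre: "L0 *\<^sub>v (Q *\<^sub>v x) \<in> wongU L0 L1 i \<longleftrightarrow> A *\<^sub>v x \<in> wongU A E i"
    if x: "x \<in> carrier_vec n" for x
  proof -
    have "A *\<^sub>v x = P' *\<^sub>v (L0 *\<^sub>v (Q *\<^sub>v x))"
      unfolding A_def using assoc_mult_mat_vec3[OF P(2) L0 Q(1) x] .
    then show ?thesis
      using Suc.IH mem_image_mult_mat_vec_iff[OF P wongU_carrier[OF A E], of "L0 *\<^sub>v (Q *\<^sub>v x)"]
        L0 Q x unfolding A_def[symmetric] E_def[symmetric] by simp
  qed
  have img: "P *\<^sub>v (E *\<^sub>v x) = L1 *\<^sub>v (Q *\<^sub>v x)" if x: "x \<in> carrier_vec n" for x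
    using assoc_mult_mat_vec3[OF P(2) L1 Q(1) x] assoc_mult_mat_vec[OF P(1,2)] P(3) L1 Q x
    unfolding E_def by simp
  show ?case unfolding A_def[symmetric] E_def[symmetric]
  proof (intro equalityI subsetI)
    fix y assume "y \<in> wongU L0 L1 (Suc i)"
    then obtain v where v: "v \<in> carrier_vec n" "L0 *\<^sub>v v \<in> wongU L0 L1 i" and y: "y = L1 *\<^sub>v v"
      using L0 by auto
    define x where "x = Q' *\<^sub>v v"
    have x: "x \<in> carrier_vec n" and v_eq: "v = Q *\<^sub>v x"
      using Q v assoc_mult_mat_vec[OF Q(1,2)] by (simp_all add: x_def)
    have "E *\<^sub>v x \<in> wongU A E (Suc i)" using pre[OF x] v v_eq x A by auto
    moreover have "y = P *\<^sub>v (E *\<^sub>v x)" using img[OF x] y v_eq by simp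
    ultimately show "y \<in> (\<lambda>x. P *\<^sub>v x) ` wongU A E (Suc i)" by blast
  next
    fix y assume "y \<in> (\<lambda>x. P *\<^sub>v x) ` wongU A E (Suc i)"
    then obtain x where x: "x \<in> carrier_vec n" "A *\<^sub>v x \<in> wongU A E i"
      and y: "y = P *\<^sub>v (E *\<^sub>v x)"
      using A by auto
    then have "L0 *\<^sub>v (Q *\<^sub>v x) \<in> wongU L0 L1 i" using pre by blast
    moreover have "Q *\<^sub>v x \<in> carrier_vec n" using Q x by simp
    ultimately show "y \<in> wongU L0 L1 (Suc i)" using img[OF x(1)] y L0 by auto
  qed
qed

lemma wongV_equivalent_pencil:
  assumes L0: "L0 \<in> carrier_mat m n" and L1: "L1 \<in> carrier_mat m n"
    and P: "P \<in> carrier_mat m m" "P' \<in> carrier_mat m m" "P * P' = 1\<^sub>m m" "P' * P = 1\<^sub>m m"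
    and Q: "Q \<in> carrier_mat n n" "Q' \<in> carrier_mat n n" "Q * Q' = 1\<^sub>m n"
  shows "wongV L0 L1 i = (\<lambda>x. Q *\<^sub>v x) ` wongV (P' * L0 * Q) (P' * L1 * Q) i"
proof -
  define A E where "A = P' * L0 * Q" and "E = P' * L1 * Q"
  have A: "A \<in> carrier_mat m n" and E: "E \<in> carrier_mat m n"
    using L0 L1 P Q by (auto simp: A_def E_def)
  have pre: "L0 *\<^sub>v v \<in> wongU L0 L1 (i - 1) \<longleftrightarrow> P' *\<^sub>v (L0 *\<^sub>v v) \<in> wongU A E (i - 1)"
    if "v \<in> carrier_vec n" for v
    using wongU_equivalent_pencil[OF L0 L1 P Q, of "i - 1"]
      mem_image_mult_mat_vec_iff[OF P wongU_carrier[OF A E], of "L0 *\<^sub>v v"] L0 that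
    unfolding A_def[symmetric] E_def[symmetric] by simp
  show ?thesis unfolding A_def[symmetric] E_def[symmetric]
  proof (intro equalityI subsetI)
    fix v assume "v \<in> wongV L0 L1 i"
    then have v: "v \<in> carrier_vec n" "P' *\<^sub>v (L0 *\<^sub>v v) \<in> wongU A E (i - 1)"
      using pre L0 by (auto simp: wongV_def)
    define x where "x = Q' *\<^sub>v v"
    have x: "x \<in> carrier_vec n" and v_eq: "v = Q *\<^sub>v x"
      using Q v assoc_mult_mat_vec[OF Q(1,2)] by (simp_all add: x_def)
    have "A *\<^sub>v x = P' *\<^sub>v (L0 *\<^sub>v v)"
      unfolding A_def v_eq using assoc_mult_mat_vec3[OF P(2) L0 Q(1) x] .
    then have "x \<in> wongV A E i" using x v A by (simp add: wongV_def)
    then show "v \<in> (\<lambda>x. Q *\<^sub>v x) ` wongV A E i" using v_eq by blast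
  next
    fix v assume "v \<in> (\<lambda>x. Q *\<^sub>v x) ` wongV A E i"
    then obtain x where x: "x \<in> carrier_vec n" "A *\<^sub>v x \<in> wongU A E (i - 1)" and v: "v = Q *\<^sub>v x"
      using A by (auto simp: wongV_def)
    have "A *\<^sub>v x = P' *\<^sub>v (L0 *\<^sub>v v)"
      unfolding A_def v using assoc_mult_mat_vec3[OF P(2) L0 Q(1) x(1)] .
    then show "v \<in> wongV L0 L1 i" using pre x v Q L0 by (simp add: wongV_def)
  qed
qed

locale staircase_pencil =
  fixes A E :: "complex mat" and m n k :: nat and s t :: "nat \<Rightarrow> nat"
  assumes A: "A \<in> carrier_mat m n" and E: "E \<in> carrier_mat m n"
    and pm: "psum s k \<le> m" and qn: "psum t k \<le> n"
    and lowA: "\<And>j. j \<in> {1..k} \<Longrightarrow> lower_left_zero A (psum s (j - 1)) (psum t j)"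
    and Ar: "full_col_rank (sub_block A (psum s k) (psum t k) (m - psum s k) (n - psum t k))"
    and superA: "\<And>j. j \<in> {1..<k} \<Longrightarrow> full_col_rank (blk A s t j (j + 1))"
    and lowE: "\<And>j. j \<le> k \<Longrightarrow> lower_left_zero E (psum s j) (psum t j)"
    and diagE: "\<And>j. j \<in> {1..k} \<Longrightarrow> full_row_rank (blk E s t j j)"
begin

lemma wongU_staircase: "i \<le> k \<Longrightarrow> wongU A E i = lead_vecs m (psum s i)"
proof (induction i)
  case 0
  then show ?case using A by (simp add: psum_def lead_vecs_0)
next
  case (Suc i)
  have "wongU A E (Suc i) = (\<lambda>x. E *\<^sub>v x) ` {x \<in> carrier_vec n. A *\<^sub>v x \<in> lead_vecs m (psum s i)}"
    using Suc A by auto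
  also have "\<dots> = (\<lambda>x. E *\<^sub>v x) ` lead_vecs n (psum t (Suc i))"
    using staircase_preimage[OF A pm qn lowA Ar superA, of "Suc i"] Suc.prems by simp
  also have "\<dots> = lead_vecs m (psum s (Suc i))"
    by (rule staircase_image[OF E pm qn lowE diagE Suc.prems])
  finally show ?case .
qed

lemma wongV_staircase:
  assumes i: "i \<in> {1..k}"
  shows "wongV A E i = lead_vecs n (psum t i)"
proof -
  have "wongU A E (i - 1) = lead_vecs m (psum s (i - 1))" using i by (intro wongU_staircase) auto
  then show ?thesis using staircase_preimage[OF A pm qn lowA Ar superA i] A by (simp add: wongV_def)
qed

end

lemma unitary_inverse:
  assumes "unitary_mat U d"
  shows "U \<in> carrier_mat d d" "mat_adjoint U \<in> carrier_mat d d"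
    "mat_adjoint U * U = 1\<^sub>m d" "U * mat_adjoint U = 1\<^sub>m d"
proof -
  show U: "U \<in> carrier_mat d d" and UU: "mat_adjoint U * U = 1\<^sub>m d"
    using assms unfolding unitary_mat_def by auto
  show H: "mat_adjoint U \<in> carrier_mat d d" using U unfolding mat_adjoint_def by auto
  show "U * mat_adjoint U = 1\<^sub>m d" by (rule mat_mult_left_right_inverse[OF H U UU])
qed

theorem wong_spaces_staircase_form:
  fixes L0 L1 U V :: "complex mat"
  assumes L0: "L0 \<in> carrier_mat m n" and L1: "L1 \<in> carrier_mat m n"
    and U: "unitary_mat U m" and V: "unitary_mat V n"
    and pm: "psum s k \<le> m" and qn: "psum t k \<le> n"
    and low0: "sub_block (mat_adjoint U * L0 * V) (psum s k) 0 (m - psum s k) (psum t k)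
                 = 0\<^sub>m (m - psum s k) (psum t k)"
    and low1: "sub_block (mat_adjoint U * L1 * V) (psum s k) 0 (m - psum s k) (psum t k)
                 = 0\<^sub>m (m - psum s k) (psum t k)"
    and Ar: "full_col_rank (sub_block (mat_adjoint U * L0 * V) (psum s k) (psum t k)
                (m - psum s k) (n - psum t k))"
    and triA: "\<And>i j. i \<in> {1..k} \<Longrightarrow> j \<in> {1..k} \<Longrightarrow> j < i \<Longrightarrow>
                 blk (mat_adjoint U * L0 * V) s t i j = 0\<^sub>m (s i) (t j)"
    and triE: "\<And>i j. i \<in> {1..k} \<Longrightarrow> j \<in> {1..k} \<Longrightarrow> j < i \<Longrightarrow>
                 blk (mat_adjoint U * L1 * V) s t i j = 0\<^sub>m (s i) (t j)"
    and diagA: "\<And>i. i \<in> {1..k} \<Longrightarrow> blk (mat_adjoint U * L0 * V) s t i i = 0\<^sub>m (s i) (t i)"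
    and diagE: "\<And>i. i \<in> {1..k} \<Longrightarrow> full_row_rank (blk (mat_adjoint U * L1 * V) s t i i)"
    and superA: "\<And>i. i \<in> {1..<k} \<Longrightarrow>
                   full_col_rank (blk (mat_adjoint U * L0 * V) s t i (i + 1))"
    and i: "i \<in> {1..k}"
  shows "wongU L0 L1 i = (\<lambda>x. U *\<^sub>v x) ` lead_vecs m (psum s i)"
    and "wongV L0 L1 i = (\<lambda>x. V *\<^sub>v x) ` lead_vecs n (psum t i)"
proof -
  note U' = unitary_inverse[OF U] and V' = unitary_inverse[OF V]
  define A E where "A = mat_adjoint U * L0 * V" and "E = mat_adjoint U * L1 * V"
  have A: "A \<in> carrier_mat m n" and E: "E \<in> carrier_mat m n"
    using L0 L1 U' V' by (auto simp: A_def E_def)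
  have lowA: "lower_left_zero A (psum s (j - 1)) (psum t j)" if "j \<in> {1..k}" for j
  proof (rule blk_zero_imp_lower_left_zero[OF A _ low0[folded A_def]])
    fix i' j' assume "i' \<in> {1..k}" "j' \<in> {1..k}" "j - 1 < i'" "j' \<le> j"
    then consider "j' < i'" | "j' = i'" by linarith
    then show "blk A s t i' j' = 0\<^sub>m (s i') (t j')"
      using triA diagA \<open>i' \<in> {1..k}\<close> \<open>j' \<in> {1..k}\<close> unfolding A_def by cases blast+
  qed (use that in simp)
  have lowE: "lower_left_zero E (psum s j) (psum t j)" if "j \<le> k" for j
    by (rule blk_zero_imp_lower_left_zero[OF E that low1[folded E_def]])
       (use triE in \<open>auto simp: E_def\<close>)
  have "staircase_pencil A E m n k s t"
    using A E pm qn lowA Ar superA lowE diagE unfolding A_def E_def by unfold_locales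
  note staircase = staircase_pencil.wongU_staircase[OF this] staircase_pencil.wongV_staircase[OF this]
  show "wongU L0 L1 i = (\<lambda>x. U *\<^sub>v x) ` lead_vecs m (psum s i)"
    using wongU_equivalent_pencil[OF L0 L1 U'(1,2,4,3) V'(1,2,4)] staircase(1)[of i] i
    by (simp add: A_def E_def)
  show "wongV L0 L1 i = (\<lambda>x. V *\<^sub>v x) ` lead_vecs n (psum t i)"
    using wongV_equivalent_pencil[OF L0 L1 U'(1,2,4,3) V'(1,2,4)] staircase(2)[OF i]
    by (simp add: A_def E_def)
qed

theorem corollary4p2:
  fixes L0 L1 U V Ud Vd S T B0 B1 :: "complex mat"
    and m n k :: nat and s t :: "nat \<Rightarrow> nat"
  assumes L0: "L0 \<in> carrier_mat m n" and L1: "L1 \<in> carrier_mat m n"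
    and U: "unitary_mat U m" and V: "unitary_mat V n"
    and pm: "psum s k \<le> m" and qn: "psum t k \<le> n"
    (* lower-left blocks zero *)
    and low0: "sub_block (mat_adjoint U * L0 * V) (psum s k) 0 (m - psum s k) (psum t k)
                 = 0\<^sub>m (m - psum s k) (psum t k)"
    and low1: "sub_block (mat_adjoint U * L1 * V) (psum s k) 0 (m - psum s k) (psum t k)
                 = 0\<^sub>m (m - psum s k) (psum t k)"
    (* A_r full column rank *)
    and Ar: "full_col_rank (sub_block (mat_adjoint U * L0 * V) (psum s k) (psum t k)
                (m - psum s k) (n - psum t k))"
    (* leading subpencil block upper triangular *)
    and triA: "\<And>i j. i \<in> {1..k} \<Longrightarrow> j \<in> {1..k} \<Longrightarrow> j < i \<Longrightarrow>
                 blk (mat_adjoint U * L0 * V) s t i j = 0\<^sub>m (s i) (t j)"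
    and triE: "\<And>i j. i \<in> {1..k} \<Longrightarrow> j \<in> {1..k} \<Longrightarrow> j < i \<Longrightarrow>
                 blk (mat_adjoint U * L1 * V) s t i j = 0\<^sub>m (s i) (t j)"
    and diagA: "\<And>i. i \<in> {1..k} \<Longrightarrow> blk (mat_adjoint U * L0 * V) s t i i = 0\<^sub>m (s i) (t i)"
    and diagE: "\<And>i. i \<in> {1..k} \<Longrightarrow> full_row_rank (blk (mat_adjoint U * L1 * V) s t i i)"
    and superA: "\<And>i. i \<in> {1..<k} \<Longrightarrow>
                   full_col_rank (blk (mat_adjoint U * L0 * V) s t i (i + 1))"
    (* U_d, V_d: unitary, block diagonal conformal with the blocks, identity outside *)
    and Ud: "unitary_mat Ud m"
    and Ud_bd: "\<And>i j. i \<in> {1..k} \<Longrightarrow> j \<in> {1..k} \<Longrightarrow> i \<noteq> j \<Longrightarrow>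
                  blk Ud s s i j = 0\<^sub>m (s i) (s j)"
    and Ud_ur: "sub_block Ud 0 (psum s k) (psum s k) (m - psum s k) = 0\<^sub>m (psum s k) (m - psum s k)"
    and Ud_ll: "sub_block Ud (psum s k) 0 (m - psum s k) (psum s k) = 0\<^sub>m (m - psum s k) (psum s k)"
    and Ud_lr: "sub_block Ud (psum s k) (psum s k) (m - psum s k) (m - psum s k) = 1\<^sub>m (m - psum s k)"
    and Vd: "unitary_mat Vd n"
    and Vd_bd: "\<And>i j. i \<in> {1..k} \<Longrightarrow> j \<in> {1..k} \<Longrightarrow> i \<noteq> j \<Longrightarrow>
                  blk Vd t t i j = 0\<^sub>m (t i) (t j)"
    and Vd_ur: "sub_block Vd 0 (psum t k) (psum t k) (n - psum t k) = 0\<^sub>m (psum t k) (n - psum t k)"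
    and Vd_ll: "sub_block Vd (psum t k) 0 (n - psum t k) (psum t k) = 0\<^sub>m (n - psum t k) (psum t k)"
    and Vd_lr: "sub_block Vd (psum t k) (psum t k) (n - psum t k) (n - psum t k) = 1\<^sub>m (n - psum t k)"
    (* staircase form w.r.t. U Ud, V Vd:  A_{i,i+1} = [Ahat; 0],  E_{i,i} = [0  Ehat] *)
    and stA: "\<And>i. i \<in> {1..<k} \<Longrightarrow> t (i + 1) \<le> s i
       \<and> sub_block (blk (mat_adjoint (U * Ud) * L0 * (V * Vd)) s t i (i + 1))
            (t (i + 1)) 0 (s i - t (i + 1)) (t (i + 1)) = 0\<^sub>m (s i - t (i + 1)) (t (i + 1))
       \<and> upper_triangular (sub_block (blk (mat_adjoint (U * Ud) * L0 * (V * Vd)) s t i (i + 1))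
            0 0 (t (i + 1)) (t (i + 1)))
       \<and> invertible_mat (sub_block (blk (mat_adjoint (U * Ud) * L0 * (V * Vd)) s t i (i + 1))
            0 0 (t (i + 1)) (t (i + 1)))"
    and stE: "\<And>i. i \<in> {1..k} \<Longrightarrow> s i \<le> t i
       \<and> sub_block (blk (mat_adjoint (U * Ud) * L1 * (V * Vd)) s t i i)
            0 0 (s i) (t i - s i) = 0\<^sub>m (s i) (t i - s i)
       \<and> upper_triangular (sub_block (blk (mat_adjoint (U * Ud) * L1 * (V * Vd)) s t i i)
            0 (t i - s i) (s i) (s i))
       \<and> invertible_mat (sub_block (blk (mat_adjoint (U * Ud) * L1 * (V * Vd)) s t i i)
            0 (t i - s i) (s i) (s i))"
    (* S, T: unit upper triangular, identity outside the leading part *)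
    and S: "S \<in> carrier_mat m m" and S_uut: "unit_upper_triangular S"
    and S_ur: "sub_block S 0 (psum s k) (psum s k) (m - psum s k) = 0\<^sub>m (psum s k) (m - psum s k)"
    and S_lr: "sub_block S (psum s k) (psum s k) (m - psum s k) (m - psum s k) = 1\<^sub>m (m - psum s k)"
    and T: "T \<in> carrier_mat n n" and T_uut: "unit_upper_triangular T"
    and T_ur: "sub_block T 0 (psum t k) (psum t k) (n - psum t k) = 0\<^sub>m (psum t k) (n - psum t k)"
    and T_lr: "sub_block T (psum t k) (psum t k) (n - psum t k) (n - psum t k) = 1\<^sub>m (n - psum t k)"
    (* B0 + lambda B1 = S^{-1} (U Ud)^* (L0 + lambda L1) (V Vd) T is bidiagonal in the leading part *)
    and B0: "B0 \<in> carrier_mat m n" and B1: "B1 \<in> carrier_mat m n"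
    and B0_eq: "mat_adjoint (U * Ud) * L0 * (V * Vd) * T = S * B0"
    and B1_eq: "mat_adjoint (U * Ud) * L1 * (V * Vd) * T = S * B1"
    and B0_bidiag: "\<And>i j. i \<in> {1..k} \<Longrightarrow> j \<in> {1..k} \<Longrightarrow> j \<noteq> i + 1 \<Longrightarrow>
                      blk B0 s t i j = 0\<^sub>m (s i) (t j)"
    and B1_bidiag: "\<And>i j. i \<in> {1..k} \<Longrightarrow> j \<in> {1..k} \<Longrightarrow> j \<noteq> i \<Longrightarrow>
                      blk B1 s t i j = 0\<^sub>m (s i) (t j)"
  shows "\<forall>i \<in> {1..k}.
           wongU L0 L1 i = col_image (lead_cols (U * Ud * S) (psum s i))
         \<and> wongV L0 L1 i = col_image (lead_cols (V * Vd * T) (psum t i))"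
proof (intro ballI conjI)
  fix i assume i: "i \<in> {1..k}"
  note wong = wong_spaces_staircase_form[OF L0 L1 U V pm qn low0 low1 Ar triA triE diagA diagE
      superA i]
  have "col_image (lead_cols (U * Ud * S) (psum s i)) = (\<lambda>x. U *\<^sub>v x) ` lead_vecs m (psum s i)"
    by (rule col_image_lead_cols_mult_triangular[OF unitary_inverse(1)[OF U] Ud S S_uut pm Ud_ll])
       (use Ud_bd i in auto)
  with wong(1) show "wongU L0 L1 i = col_image (lead_cols (U * Ud * S) (psum s i))" by simp
  have "col_image (lead_cols (V * Vd * T) (psum t i)) = (\<lambda>x. V *\<^sub>v x) ` lead_vecs n (psum t i)"
    by (rule col_image_lead_cols_mult_triangular[OF unitary_inverse(1)[OF V] Vd T T_uut qn Vd_ll])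
       (use Vd_bd i in auto)
  with wong(2) show "wongV L0 L1 i = col_image (lead_cols (V * Vd * T) (psum t i))" by simp
qed

end
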